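(* Let $\mu>0$ and let $\mathcal P$ be the Fourier multiplier operator on $2\pi$-periodic functions given by either (i) $\mathcal P(k)=\dfrac{1}{1+\mu^2k^2/2}$, or (ii) $\mathcal P(k)=\dfrac{\tanh(\mu k)}{\mu k}$ for $k\neq0$, $\mathcal P(0)=1$. Suppose $q\in H^2([0,2\pi])$ is real-valued and $2\pi$-periodic, and that the function $\mathcal P q_x$ vanishes only on a set of (Lebesgue) measure zero. Then the operator \[ f\mapsto (\mathcal P q_x)\,\mathcal P^2\partial_x^2\big((\mathcal P q_x)\,f\big) \] acting on $L^2([0,2\pi])$ has no zero eigenvalue, i.e. there is no nonzero $f\in L^2([0,2\pi])$ with $(\mathcal P q_x)\,\mathcal P^2\partial_x^2\big((\mathcal P q_x)\,f\big)=0$.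
   Context: All functions are real-valued and $2\pi$-periodic on $[0,2\pi]$, with Fourier coefficients $\hat f_k$, $k\in\mathbb Z$. A Fourier multiplier with symbol $m(k)$ acts by $\widehat{(mf)}_k=m(k)\hat f_k$; $\partial_x$ has symbol $ik$, so $\mathcal P^2\partial_x^2$ has symbol $-k^2\mathcal P(k)^2$. The expression $\mathcal P q_x$ denotes the function obtained by applying $\mathcal P$ to $q_x=\partial_x q$, and $(\mathcal P q_x)\,g$ denotes pointwise multiplication. Choice (i) corresponds to the "regularised Boussinesq" model and choice (ii) to the "regularised Boussinesq-Whitham" model. *)

theory Defs
  imports "HOL-Analysis.Analysis"
begin

definition L2_per :: "(real \<Rightarrow> real) \<Rightarrow> bool" where
  "L2_per f \<longleftrightarrow> f \<in> borel_measurable lebesgue \<and>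
     set_integrable lebesgue {0..2*pi} (\<lambda>x. (f x)^2)"

definition fcoeff :: "(real \<Rightarrow> real) \<Rightarrow> int \<Rightarrow> complex" where
  "fcoeff f k = complex_of_real (1 / (2*pi)) *
     (LINT x:{0..2*pi}|lebesgue. complex_of_real (f x) * cis (- (real_of_int k * x)))"

definition H2_per :: "(real \<Rightarrow> real) \<Rightarrow> bool" where
  "H2_per f \<longleftrightarrow> L2_per f \<and>
     (\<lambda>k::int. (real_of_int k)^4 * (cmod (fcoeff f k))^2) summable_on UNIV"

definition is_multiplier_image :: "(int \<Rightarrow> complex) \<Rightarrow> (real \<Rightarrow> real) \<Rightarrow> (real \<Rightarrow> real) \<Rightarrow> bool" where
  "is_multiplier_image m h g \<longleftrightarrow> L2_per g \<and> (\<forall>k. fcoeff g k = m k * fcoeff h k)"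

definition P_rB :: "real \<Rightarrow> int \<Rightarrow> real" where
  "P_rB \<mu> k = 1 / (1 + \<mu>^2 * (real_of_int k)^2 / 2)"

definition P_rBW :: "real \<Rightarrow> int \<Rightarrow> real" where
  "P_rBW \<mu> k = (if k = 0 then 1 else tanh (\<mu> * real_of_int k) / (\<mu> * real_of_int k))"

end

theory Submission
  imports Defs
begin

text \<open>
  Since \<open>w\<close> vanishes only on a null set, \<open>u = P\<^sup>2 (w f)''\<close> vanishes almost everywhere, so every
  Fourier coefficient of \<open>w f\<close> at \<open>k \<noteq> 0\<close> vanishes (the symbol \<open>-k\<^sup>2 P(k)\<^sup>2\<close> does not), and by
  uniqueness of Fourier coefficients \<open>w f\<close> equals a constant \<open>c\<close> almost everywhere.
  As \<open>q \<in> H\<^sup>2\<close> and \<open>\<bar>k\<bar> P(k)\<close> is bounded, the coefficients of \<open>w = P q\<^sub>x\<close> satisfy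
  \<open>\<Sum> \<bar>k\<bar> \<bar>w\<^sub>k\<bar> < \<infinity>\<close>, so \<open>w\<close> agrees almost everywhere with a Lipschitz function \<open>W\<close>.
  Its mean \<open>w\<^sub>0\<close> is zero, so \<open>W\<close> has a zero \<open>x\<^sub>0\<close>, and then \<open>\<bar>c\<bar> \<le> L \<bar>x - x\<^sub>0\<bar> \<bar>f x\<bar>\<close>.
  Because \<open>1 / (x - x\<^sub>0)\<^sup>2\<close> is not integrable near \<open>x\<^sub>0\<close> while \<open>f\<close> is square integrable,
  \<open>c = 0\<close>, hence \<open>f = 0\<close> almost everywhere.

  Uniqueness of Fourier coefficients is reduced to integrals over half-lines, approximating
  their indicators by continuous periodic cutoffs, which are in turn approximated by
  trigonometric polynomials (Stone-Weierstrass on the circle).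
\<close>

section \<open>Fourier coefficients\<close>

lemma set_integrable_mult_continuous:
  fixes g \<phi> :: "real \<Rightarrow> real"
  assumes g: "set_integrable lebesgue {a..b} g" and \<phi>: "continuous_on {a..b} \<phi>"
  shows "set_integrable lebesgue {a..b} (\<lambda>x. g x * \<phi> x)"
proof -
  have "(\<lambda>x. \<phi> x * g x) absolutely_integrable_on {a..b}"
    using \<phi> g by (intro absolutely_integrable_bounded_measurable_product_real
        continuous_imp_measurable_on_sets_lebesgue compact_imp_bounded compact_continuous_image) auto
  then show ?thesis by (simp add: mult.commute)
qed

lemma set_integrable_complex_mult_continuous:
  fixes g :: "real \<Rightarrow> real" and \<phi> :: "real \<Rightarrow> complex"
  assumes g: "set_integrable lebesgue {a..b} g" and \<phi>: "continuous_on {a..b} \<phi>"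
  shows "set_integrable lebesgue {a..b} (\<lambda>x. complex_of_real (g x) * \<phi> x)"
proof -
  have "set_integrable lebesgue {a..b} (\<lambda>x. complex_of_real (g x))"
    using g unfolding set_integrable_def by (simp add: scaleR_conv_of_real flip: of_real_mult)
  then have "(\<lambda>x. \<phi> x * complex_of_real (g x)) absolutely_integrable_on {a..b}"
    using \<phi> by (intro absolutely_integrable_bounded_measurable_product[OF bilinear_times]
        continuous_imp_measurable_on_sets_lebesgue compact_imp_bounded compact_continuous_image) auto
  then show ?thesis by (simp add: mult.commute)
qed

lemma set_integral_fcoeff:
  "(LINT x:{0..2*pi}|lebesgue. complex_of_real (g x) * cis (- (real_of_int k * x))) = 2 * pi * fcoeff g k"
  unfolding fcoeff_def by simp

lemma set_integral_cis:
  "(LINT x:{0..2*pi}|lebesgue. cis (real_of_int j * x)) = (if j = 0 then 2 * pi else 0)"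
proof -
  have "(LINT x:{0..2*pi}|lebesgue. cis (real_of_int j * x)) = integral {0..2*pi} (\<lambda>x. cis (real_of_int j * x))"
    by (intro set_lebesgue_integral_eq_integral(2) absolutely_integrable_continuous_real continuous_intros)
  also have "\<dots> = (if j = 0 then 2 * pi else 0)"
  proof (cases "j = 0")
    case True
    then show ?thesis by (simp add: scaleR_conv_of_real)
  next
    case False
    let ?F = "\<lambda>x. cis (real_of_int j * x) / (\<i> * of_int j)"
    have "(?F has_vector_derivative cis (real_of_int j * x)) (at x within {0..2*pi})" for x
    proof -
      have "((\<lambda>z. exp (\<i> * of_int j * z) / (\<i> * of_int j)) has_field_derivative exp (\<i> * of_int j * of_real x))
          (at (of_real x))"
        using False by (auto intro!: derivative_eq_intros simp: field_simps)
      from has_vector_derivative_real_field[OF this] show ?thesis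
        by (simp add: cis_conv_exp mult.assoc)
    qed
    then have "((\<lambda>x. cis (real_of_int j * x)) has_integral (?F (2*pi) - ?F 0)) {0..2*pi}"
      by (intro fundamental_theorem_of_calculus) auto
    moreover have "cis (real_of_int j * (2*pi)) = 1"
      by (simp add: cis_conv_exp exp_eq_1 mult_ac)
    ultimately show ?thesis using False by (simp add: integral_unique)
  qed
  finally show ?thesis .
qed

lemma fcoeff_const: "fcoeff (\<lambda>x. c) k = (if k = 0 then complex_of_real c else 0)"
  using set_integral_cis[of "- k"] by (simp add: fcoeff_def)

lemma fcoeff_0: "fcoeff g 0 = complex_of_real ((LINT x:{0..2*pi}|lebesgue. g x) / (2 * pi))"
  by (simp add: fcoeff_def set_integral_complex_of_real)

lemma fcoeff_uminus: "fcoeff g (- k) = cnj (fcoeff g k)"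
proof -
  have integrand_eq: "(\<lambda>x. indicator {0..2*pi} x *\<^sub>R (complex_of_real (g x) * cis (- (real_of_int (- k) * x))))
      = (\<lambda>x. cnj (indicator {0..2*pi} x *\<^sub>R (complex_of_real (g x) * cis (- (real_of_int k * x)))))"
    by (simp add: fun_eq_iff cis_cnj)
  have "(LINT x:{0..2*pi}|lebesgue. complex_of_real (g x) * cis (- (real_of_int (- k) * x)))
      = cnj (LINT x:{0..2*pi}|lebesgue. complex_of_real (g x) * cis (- (real_of_int k * x)))"
    unfolding set_lebesgue_integral_def integrand_eq by (rule Bochner_Integration.integral_cnj)
  then show ?thesis by (simp add: fcoeff_def)
qed

lemma fcoeff_diff:
  assumes g: "set_integrable lebesgue {0..2*pi} g" and h: "set_integrable lebesgue {0..2*pi} h"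
  shows "fcoeff (\<lambda>x. g x - h x) k = fcoeff g k - fcoeff h k"
proof -
  have "set_integrable lebesgue {0..2*pi} (\<lambda>x. complex_of_real (g x) * cis (- (real_of_int k * x)))"
       "set_integrable lebesgue {0..2*pi} (\<lambda>x. complex_of_real (h x) * cis (- (real_of_int k * x)))"
    by (intro set_integrable_complex_mult_continuous g h continuous_intros)+
  from set_integral_diff(2)[OF this] show ?thesis
    by (simp add: fcoeff_def left_diff_distrib diff_divide_distrib)
qed

lemma fcoeff_eq_0_if_AE_eq_0:
  assumes "AE x in lebesgue. x \<in> {0..2*pi} \<longrightarrow> g x = 0"
  shows "fcoeff g k = 0"
proof -
  have "(LINT x:{0..2*pi}|lebesgue. complex_of_real (g x) * cis (- (real_of_int k * x))) = 0"
    unfolding set_lebesgue_integral_def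
    by (rule integral_eq_zero_AE) (use assms in \<open>eventually_elim, auto simp: indicator_def\<close>)
  then show ?thesis by (simp add: fcoeff_def)
qed

section \<open>Uniqueness of Fourier coefficients\<close>

lemma AE_eq_0_if_integral_greaterThan_eq_0_lborel:
  fixes h :: "real \<Rightarrow> real"
  assumes h: "integrable lborel h" and zero: "\<And>y. (LINT x:{y<..}|lborel. h x) = 0"
  shows "AE x in lborel. h x = 0"
proof -
  have [measurable]: "h \<in> borel_measurable borel" using h by auto
  have emeasure_eq: "emeasure (density lborel (\<lambda>x. ennreal (g x))) {y<..} = ennreal (LINT x:{y<..}|lborel. g x)"
    if "integrable lborel g" "\<And>x. g x \<ge> 0" for g :: "real \<Rightarrow> real" and y
    using that by (subst emeasure_density) (auto intro!: nn_set_integral_eq_set_integral)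
  let ?pos = "\<lambda>x. max 0 (h x)" and ?neg = "\<lambda>x. max 0 (- h x)"
  have pos_neg_integrable: "set_integrable lborel {y<..} ?pos" "set_integrable lborel {y<..} ?neg" for y
    using h unfolding set_integrable_def by (intro integrable_mult_indicator integrable_max; simp)+
  have "density lborel (\<lambda>x. ennreal (?pos x)) = density lborel (\<lambda>x. ennreal (?neg x))"
  proof (rule measure_eqI_lessThan)
    fix y
    have "(LINT x:{y<..}|lborel. ?pos x) - (LINT x:{y<..}|lborel. ?neg x) = (LINT x:{y<..}|lborel. h x)"
      by (subst set_integral_diff(2)[OF pos_neg_integrable, symmetric])
        (auto intro!: set_lebesgue_integral_cong)
    then show "emeasure (density lborel (\<lambda>x. ennreal (?pos x))) {y<..}
        = emeasure (density lborel (\<lambda>x. ennreal (?neg x))) {y<..}"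
      using h zero by (simp add: emeasure_eq)
    show "emeasure (density lborel (\<lambda>x. ennreal (?pos x))) {y<..} < \<infinity>"
      using h by (simp add: emeasure_eq)
  qed auto
  then have "AE x in lborel. ennreal (?pos x) = ennreal (?neg x)"
    by (intro sigma_finite_measure.density_unique[OF sigma_finite_lborel]) auto
  then show ?thesis
    by eventually_elim (auto simp: max_def split: if_splits)
qed

lemma AE_eq_0_if_integral_greaterThan_eq_0:
  fixes h :: "real \<Rightarrow> real"
  assumes h: "integrable lebesgue h" and zero: "\<And>y. (LINT x:{y<..}|lebesgue. h x) = 0"
  shows "AE x in lebesgue. h x = 0"
proof -
  have [measurable]: "h \<in> borel_measurable lebesgue" using h by auto
  then obtain h' where h'[measurable]: "h' \<in> borel_measurable lborel"
    and h_eq_lborel: "AE x in lborel. h x = h' x"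
    using completion_ex_borel_measurable_real by blast
  have h_eq: "AE x in lebesgue. h x = h' x" using h_eq_lborel by (rule AE_completion)
  have [measurable]: "h' \<in> borel_measurable lebesgue" by (simp add: measurable_completion)
  have "integrable lebesgue h'" using h _ h_eq by (rule integrable_cong_AE_imp) simp
  then have "integrable lborel h'" by (simp add: integrable_completion)
  moreover have "(LINT x:{y<..}|lborel. h' x) = 0" for y
  proof -
    have "(LINT x:{y<..}|lborel. h' x) = (LINT x:{y<..}|lebesgue. h' x)"
      unfolding set_lebesgue_integral_def by (rule integral_completion[symmetric]) simp
    also have "\<dots> = (LINT x:{y<..}|lebesgue. h x)"
      using h_eq by (intro set_lebesgue_integral_cong_AE) auto
    finally show ?thesis using zero by simp
  qed
  ultimately have "AE x in lborel. h' x = 0" by (rule AE_eq_0_if_integral_greaterThan_eq_0_lborel)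
  then have "AE x in lebesgue. h' x = 0" by (rule AE_completion)
  with h_eq show ?thesis by eventually_elim simp
qed

inductive trig_poly :: "(real \<Rightarrow> complex) \<Rightarrow> bool" where
  monomial: "trig_poly (\<lambda>x. c * cis (of_int k * x))"
| add: "trig_poly f \<Longrightarrow> trig_poly g \<Longrightarrow> trig_poly (\<lambda>x. f x + g x)"

lemma trig_poly_mult:
  assumes "trig_poly f" "trig_poly g"
  shows "trig_poly (\<lambda>x. f x * g x)"
  using assms
proof (induction f rule: trig_poly.induct)
  case (monomial c k)
  from monomial.prems show ?case
  proof (induction g rule: trig_poly.induct)
    case (monomial d l)
    have "(\<lambda>x. c * cis (of_int k * x) * (d * cis (of_int l * x))) = (\<lambda>x. (c * d) * cis (of_int (k + l) * x))"
      by (simp add: cis_mult algebra_simps)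
    then show ?case by (simp only: trig_poly.monomial)
  next
    case (add g1 g2)
    then show ?case by (simp add: distrib_left trig_poly.add)
  qed
next
  case (add f1 f2)
  then show ?case by (simp add: distrib_right trig_poly.add)
qed

lemma continuous_on_trig_poly: "trig_poly f \<Longrightarrow> continuous_on S f"
  by (induction f rule: trig_poly.induct) (auto intro!: continuous_intros)

lemma trig_poly_real_polynomial_function_cis:
  assumes "real_polynomial_function p"
  shows "trig_poly (\<lambda>x. complex_of_real (p (cis x)))"
  using assms
proof (induction p rule: real_polynomial_function.induct)
  case (linear p)
  then interpret bounded_linear p .
  have cis_eq: "cis x = cos x *\<^sub>R 1 + sin x *\<^sub>R \<i>" for x by (simp add: complex_eq_iff)
  have "(\<lambda>x. complex_of_real (p (cis x))) = (\<lambda>x. (of_real (p 1) / 2 + of_real (p \<i>) / (2 * \<i>)) * cis (of_int 1 * x)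
          + (of_real (p 1) / 2 - of_real (p \<i>) / (2 * \<i>)) * cis (of_int (- 1) * x))"
    by (subst cis_eq) (simp add: add scale fun_eq_iff complex_eq_iff field_simps cis.ctr)
  then show ?case by (simp only:) (intro trig_poly.intros)
next
  case (const c)
  have "(\<lambda>x. complex_of_real c) = (\<lambda>x. complex_of_real c * cis (of_int 0 * x))" by simp
  then show ?case by (simp only: trig_poly.monomial)
next
  case (add f g)
  then show ?case by (simp add: trig_poly.add)
next
  case (mult f g)
  then show ?case by (simp add: trig_poly_mult)
qed

lemma set_integral_mult_trig_poly_eq_0:
  fixes g :: "real \<Rightarrow> real"
  assumes g: "set_integrable lebesgue {0..2*pi} g" and coeffs: "\<And>k. fcoeff g k = 0"
    and \<phi>: "trig_poly \<phi>"
  shows "(LINT x:{0..2*pi}|lebesgue. complex_of_real (g x) * \<phi> x) = 0"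
  using \<phi>
proof (induction \<phi> rule: trig_poly.induct)
  case (monomial c k)
  have "(LINT x:{0..2*pi}|lebesgue. complex_of_real (g x) * (c * cis (of_int k * x)))
      = c * (LINT x:{0..2*pi}|lebesgue. complex_of_real (g x) * cis (- (real_of_int (- k) * x)))"
    by (simp add: algebra_simps)
  also have "\<dots> = 0"
    using set_integral_fcoeff[of g "- k"] coeffs by simp
  finally show ?case .
next
  case (add f1 f2)
  have "set_integrable lebesgue {0..2*pi} (\<lambda>x. complex_of_real (g x) * f1 x)"
       "set_integrable lebesgue {0..2*pi} (\<lambda>x. complex_of_real (g x) * f2 x)"
    using add.hyps by (auto intro!: set_integrable_complex_mult_continuous[OF g] continuous_on_trig_poly)
  then show ?case using add.IH by (simp add: distrib_left set_integral_add)
qed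

lemma continuous_on_compose_cis:
  "continuous_on (sphere 0 1) \<psi> \<Longrightarrow> continuous_on S (\<lambda>x. \<psi> (cis x))"
  by (rule continuous_on_compose2) (auto intro!: continuous_intros)

lemma abs_set_integral_mult_circle_le:
  fixes g :: "real \<Rightarrow> real" and \<psi> :: "complex \<Rightarrow> real"
  assumes g: "set_integrable lebesgue {0..2*pi} g" and coeffs: "\<And>k. fcoeff g k = 0"
    and \<psi>: "continuous_on (sphere 0 1) \<psi>" and "e > 0"
  shows "\<bar>LINT x:{0..2*pi}|lebesgue. g x * \<psi> (cis x)\<bar> \<le> e * (LINT x:{0..2*pi}|lebesgue. \<bar>g x\<bar>)"
proof -
  let ?I = "{0..2*pi}"
  obtain p where p: "real_polynomial_function p" and p_approx: "\<And>z. z \<in> sphere 0 1 \<Longrightarrow> \<bar>\<psi> z - p z\<bar> < e"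
    using Stone_Weierstrass_real_polynomial_function[OF compact_sphere \<psi> \<open>e > 0\<close>] by blast
  have g\<psi>: "set_integrable lebesgue ?I (\<lambda>x. g x * \<psi> (cis x))"
    by (rule set_integrable_mult_continuous[OF g continuous_on_compose_cis[OF \<psi>]])
  have "continuous_on (sphere 0 1) p"
    using p continuous_on_polymonial_function real_polynomial_function_eq by blast
  then have gp: "set_integrable lebesgue ?I (\<lambda>x. g x * p (cis x))"
    by (rule set_integrable_mult_continuous[OF g continuous_on_compose_cis])
  have "complex_of_real (LINT x:?I|lebesgue. g x * p (cis x))
      = (LINT x:?I|lebesgue. complex_of_real (g x) * complex_of_real (p (cis x)))"
    by (simp flip: set_integral_complex_of_real)
  also have "\<dots> = 0"
    by (rule set_integral_mult_trig_poly_eq_0[OF g coeffs trig_poly_real_polynomial_function_cis[OF p]])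
  finally have "(LINT x:?I|lebesgue. g x * \<psi> (cis x)) = (LINT x:?I|lebesgue. g x * (\<psi> (cis x) - p (cis x)))"
    using set_integral_diff(2)[OF g\<psi> gp] by (simp add: algebra_simps)
  also have "\<bar>\<dots>\<bar> \<le> (LINT x:?I|lebesgue. \<bar>g x * (\<psi> (cis x) - p (cis x))\<bar>)"
    using set_integral_norm_bound[OF set_integral_diff(1)[OF g\<psi> gp]] by (simp add: algebra_simps)
  also have "\<dots> \<le> (LINT x:?I|lebesgue. \<bar>g x\<bar> * e)"
  proof (rule set_integral_mono)
    show "set_integrable lebesgue ?I (\<lambda>x. \<bar>g x * (\<psi> (cis x) - p (cis x))\<bar>)"
      using set_integrable_abs[OF set_integral_diff(1)[OF g\<psi> gp]] by (simp add: algebra_simps)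
    show "\<bar>g x * (\<psi> (cis x) - p (cis x))\<bar> \<le> \<bar>g x\<bar> * e" for x
      using p_approx[of "cis x"] by (simp add: abs_mult mult_left_mono less_imp_le)
  qed (use set_integrable_abs[OF g] in simp)
  finally show ?thesis by (simp add: mult.commute)
qed

lemma set_integral_mult_circle_eq_0:
  fixes g :: "real \<Rightarrow> real" and \<psi> :: "complex \<Rightarrow> real"
  assumes g: "set_integrable lebesgue {0..2*pi} g" and coeffs: "\<And>k. fcoeff g k = 0"
    and \<psi>: "continuous_on (sphere 0 1) \<psi>"
  shows "(LINT x:{0..2*pi}|lebesgue. g x * \<psi> (cis x)) = 0"
proof -
  define C where "C = (LINT x:{0..2*pi}|lebesgue. \<bar>g x\<bar>)"
  have "C \<ge> 0" unfolding C_def set_lebesgue_integral_def by (rule Bochner_Integration.integral_nonneg) simp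
  have "\<bar>LINT x:{0..2*pi}|lebesgue. g x * \<psi> (cis x)\<bar> \<le> 0 + e" if "e > 0" for e
  proof -
    have "e / (C + 1) * C \<le> e" using \<open>C \<ge> 0\<close> \<open>e > 0\<close> by (simp add: field_simps)
    then show ?thesis
      using abs_set_integral_mult_circle_le[OF g coeffs \<psi>, of "e / (C + 1)"] \<open>C \<ge> 0\<close> \<open>e > 0\<close>
      by (simp add: C_def)
  qed
  then have "\<bar>LINT x:{0..2*pi}|lebesgue. g x * \<psi> (cis x)\<bar> \<le> 0" by (rule field_le_epsilon)
  then show ?thesis by simp
qed

lemma continuous_on_sphere_periodic_lift:
  fixes \<phi> :: "real \<Rightarrow> 'a::topological_space"
  assumes \<phi>: "continuous_on {0..2*pi} \<phi>" and periodic: "\<phi> 0 = \<phi> (2*pi)"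
  obtains \<psi> where "continuous_on (sphere 0 1) \<psi>" and "\<And>x. x \<in> {0..2*pi} \<Longrightarrow> \<psi> (cis x) = \<phi> x"
proof
  define p where "p t = \<phi> (2*pi*t)" for t
  have "path p" unfolding path_def p_def
    by (rule continuous_on_compose2[OF \<phi>]) (auto intro!: continuous_intros)
  then have "homotopic_loops UNIV p p"
    by (simp add: homotopic_loops_refl pathfinish_def pathstart_def p_def periodic)
  \<comment> \<open>Continuity of the induced circle map comes with the (trivial) homotopy of loops.\<close>
  then have "homotopic_with_canon (\<lambda>h. True) (sphere 0 1) UNIV
      (p \<circ> (\<lambda>z. Arg2pi z / (2 * pi))) (p \<circ> (\<lambda>z. Arg2pi z / (2 * pi)))"
    by (rule homotopic_loops_imp_homotopic_circlemaps)
  then show "continuous_on (sphere 0 1) (p \<circ> (\<lambda>z. Arg2pi z / (2 * pi)))"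
    using homotopic_with_imp_continuous by blast
  show "(p \<circ> (\<lambda>z. Arg2pi z / (2 * pi))) (cis x) = \<phi> x" if "x \<in> {0..2*pi}" for x
  proof (cases "x = 2*pi")
    case True
    then show ?thesis using Arg2pi_of_real[of 1] by (simp add: p_def periodic)
  next
    case False
    then have "Arg2pi (cis x) = x" using that by (simp add: cis_conv_exp Arg2pi_exp)
    then show ?thesis by (simp add: p_def)
  qed
qed

lemma set_integral_mult_periodic_eq_0:
  fixes g \<phi> :: "real \<Rightarrow> real"
  assumes g: "set_integrable lebesgue {0..2*pi} g" and coeffs: "\<And>k. fcoeff g k = 0"
    and \<phi>: "continuous_on {0..2*pi} \<phi>" and periodic: "\<phi> 0 = \<phi> (2*pi)"
  shows "(LINT x:{0..2*pi}|lebesgue. g x * \<phi> x) = 0"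
proof -
  obtain \<psi> where \<psi>: "continuous_on (sphere 0 1) \<psi>" and \<psi>_cis: "\<And>x. x \<in> {0..2*pi} \<Longrightarrow> \<psi> (cis x) = \<phi> x"
    using continuous_on_sphere_periodic_lift[OF \<phi> periodic] by blast
  have "(LINT x:{0..2*pi}|lebesgue. g x * \<phi> x) = (LINT x:{0..2*pi}|lebesgue. g x * \<psi> (cis x))"
    by (rule set_lebesgue_integral_cong) (simp_all add: \<psi>_cis)
  also have "\<dots> = 0" by (rule set_integral_mult_circle_eq_0[OF g coeffs \<psi>])
  finally show ?thesis .
qed

lemma set_integral_mult_dominated_tendsto:
  fixes g :: "'a \<Rightarrow> real"
  assumes g: "set_integrable M A g"
    and [measurable]: "\<And>n. \<phi> n \<in> borel_measurable M" "\<psi> \<in> borel_measurable M"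
    and bounded: "\<And>n x. \<bar>\<phi> n x\<bar> \<le> 1"
    and lim: "AE x in M. x \<in> A \<longrightarrow> (\<lambda>n. \<phi> n x) \<longlonglongrightarrow> \<psi> x"
  shows "(\<lambda>n. LINT x:A|M. g x * \<phi> n x) \<longlonglongrightarrow> (LINT x:A|M. g x * \<psi> x)"
  unfolding set_lebesgue_integral_def
proof (rule integral_dominated_convergence)
  have [measurable]: "(\<lambda>x. indicator A x *\<^sub>R g x) \<in> borel_measurable M"
    using g unfolding set_integrable_def by auto
  have measurable_mult: "(\<lambda>x. indicator A x *\<^sub>R (g x * \<rho> x)) \<in> borel_measurable M"
    if [measurable]: "\<rho> \<in> borel_measurable M" for \<rho>
  proof -
    have "(\<lambda>x. (indicator A x *\<^sub>R g x) * \<rho> x) \<in> borel_measurable M" by measurable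
    then show ?thesis by (simp add: mult.assoc)
  qed
  show "(\<lambda>x. indicator A x *\<^sub>R (g x * \<psi> x)) \<in> borel_measurable M"
    by (rule measurable_mult) simp
  show "(\<lambda>x. indicator A x *\<^sub>R (g x * \<phi> n x)) \<in> borel_measurable M" for n
    by (rule measurable_mult) simp
  show "integrable M (\<lambda>x. norm (indicator A x *\<^sub>R g x))"
    using g unfolding set_integrable_def by simp
  show "AE x in M. norm (indicator A x *\<^sub>R (g x * \<phi> n x)) \<le> norm (indicator A x *\<^sub>R g x)" for n
    using bounded[of n] by (intro AE_I2) (simp add: abs_mult mult_left_le indicator_def)
  show "AE x in M. (\<lambda>n. indicator A x *\<^sub>R (g x * \<phi> n x)) \<longlonglongrightarrow> indicator A x *\<^sub>R (g x * \<psi> x)"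
    using lim by eventually_elim (auto intro: tendsto_intros simp: indicator_def)
qed

definition ramp :: "real \<Rightarrow> real" where
  "ramp t = max 0 (min 1 t)"

text \<open>The last two ramps only matter near \<open>0\<close> and \<open>2\<pi>\<close>, where they make the cutoff periodic.\<close>

definition periodic_cutoff :: "real \<Rightarrow> nat \<Rightarrow> real \<Rightarrow> real" where
  "periodic_cutoff y n x =
     max (ramp (real n * (x - y))) (max (ramp (1 - real n * x)) (ramp (1 + real n * (x - 2*pi))))"

lemma continuous_on_periodic_cutoff: "continuous_on S (periodic_cutoff y n)"
  unfolding periodic_cutoff_def ramp_def by (intro continuous_intros)

lemma abs_periodic_cutoff_le_1: "\<bar>periodic_cutoff y n x\<bar> \<le> 1"
  by (simp add: periodic_cutoff_def ramp_def le_max_iff_disj)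

lemma periodic_cutoff_0_eq_2pi: "periodic_cutoff y n 0 = periodic_cutoff y n (2*pi)"
  by (simp add: periodic_cutoff_def ramp_def max_def)

lemma tendsto_periodic_cutoff:
  assumes "0 < x" "x < 2*pi"
  shows "(\<lambda>n. periodic_cutoff y n x) \<longlonglongrightarrow> indicator {y<..} x"
proof -
  have eventually_ge_1: "eventually (\<lambda>n. real n * d \<ge> 1) sequentially" if "d > 0" for d
    using filterlim_real_sequentially[unfolded filterlim_at_top, rule_format, of "1 / d"]
    by eventually_elim (use that in \<open>simp add: field_simps\<close>)
  show ?thesis
  proof (cases "y < x")
    case True
    then have "x - y > 0" by simp
    from eventually_ge_1[OF this] have "eventually (\<lambda>n. periodic_cutoff y n x = 1) sequentially"
      by eventually_elim (auto simp: periodic_cutoff_def ramp_def max_def)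
    then show ?thesis using True by (simp add: tendsto_eventually)
  next
    case False
    have "2*pi - x > 0" using assms by simp
    have "eventually (\<lambda>n. periodic_cutoff y n x = 0) sequentially"
      using eventually_ge_1[OF \<open>0 < x\<close>] eventually_ge_1[OF \<open>2*pi - x > 0\<close>]
    proof eventually_elim
      case (elim n)
      have "real n * (x - y) \<le> 0" using False by (simp add: mult_nonneg_nonpos)
      with elim show ?case by (simp add: periodic_cutoff_def ramp_def algebra_simps)
    qed
    then show ?thesis using False by (simp add: tendsto_eventually)
  qed
qed

lemma set_integral_greaterThan_eq_0_if_fcoeff_eq_0:
  fixes g :: "real \<Rightarrow> real"
  assumes g: "set_integrable lebesgue {0..2*pi} g" and coeffs: "\<And>k. fcoeff g k = 0"
  shows "(LINT x:{0..2*pi}|lebesgue. g x * indicator {y<..} x) = 0"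
proof -
  have "AE x in lebesgue. x \<noteq> 0 \<and> x \<noteq> 2*pi"
    by (intro AE_conjI AE_completion AE_lborel_singleton)
  then have "AE x in lebesgue. x \<in> {0..2*pi} \<longrightarrow> (\<lambda>n. periodic_cutoff y n x) \<longlonglongrightarrow> indicator {y<..} x"
    by eventually_elim (auto intro: tendsto_periodic_cutoff)
  then have "(\<lambda>n. LINT x:{0..2*pi}|lebesgue. g x * periodic_cutoff y n x)
      \<longlonglongrightarrow> (LINT x:{0..2*pi}|lebesgue. g x * indicator {y<..} x)"
    by (intro set_integral_mult_dominated_tendsto[OF g] abs_periodic_cutoff_le_1 measurable_completion)
      (simp_all add: borel_measurable_continuous_onI continuous_on_periodic_cutoff)
  moreover have "(LINT x:{0..2*pi}|lebesgue. g x * periodic_cutoff y n x) = 0" for n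
    by (rule set_integral_mult_periodic_eq_0[OF g coeffs continuous_on_periodic_cutoff periodic_cutoff_0_eq_2pi])
  ultimately show ?thesis by (simp add: LIMSEQ_const_iff)
qed

lemma AE_eq_0_if_fcoeff_eq_0:
  fixes g :: "real \<Rightarrow> real"
  assumes g: "set_integrable lebesgue {0..2*pi} g" and coeffs: "\<And>k. fcoeff g k = 0"
  shows "AE x in lebesgue. x \<in> {0..2*pi} \<longrightarrow> g x = 0"
proof -
  have "AE x in lebesgue. indicator {0..2*pi} x * g x = 0"
  proof (rule AE_eq_0_if_integral_greaterThan_eq_0)
    show "integrable lebesgue (\<lambda>x. indicator {0..2*pi} x * g x)"
      using g unfolding set_integrable_def by simp
    show "(LINT x:{y<..}|lebesgue. indicator {0..2*pi} x * g x) = 0" for y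
      using set_integral_greaterThan_eq_0_if_fcoeff_eq_0[OF g coeffs, of y]
      unfolding set_lebesgue_integral_def by (simp add: mult_ac)
  qed
  then show ?thesis by eventually_elim (auto simp: indicator_def)
qed

lemma AE_eq_if_fcoeff_eq:
  assumes g: "set_integrable lebesgue {0..2*pi} g" and h: "set_integrable lebesgue {0..2*pi} h"
    and coeffs: "\<And>k. fcoeff g k = fcoeff h k"
  shows "AE x in lebesgue. x \<in> {0..2*pi} \<longrightarrow> g x = h x"
proof -
  have "AE x in lebesgue. x \<in> {0..2*pi} \<longrightarrow> g x - h x = 0"
    using g h coeffs by (intro AE_eq_0_if_fcoeff_eq_0) (simp_all add: fcoeff_diff)
  then show ?thesis by eventually_elim simp
qed

lemma AE_eq_const_if_fcoeff_eq_0: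
  assumes g: "set_integrable lebesgue {0..2*pi} g" and coeffs: "\<And>k. k \<noteq> 0 \<Longrightarrow> fcoeff g k = 0"
  shows "AE x in lebesgue. x \<in> {0..2*pi} \<longrightarrow> g x = Re (fcoeff g 0)"
proof (rule AE_eq_if_fcoeff_eq[OF g])
  show "set_integrable lebesgue {0..2*pi} (\<lambda>x. Re (fcoeff g 0))"
    by (intro absolutely_integrable_continuous_real continuous_intros)
  show "fcoeff g k = fcoeff (\<lambda>x. Re (fcoeff g 0)) k" for k
    by (simp add: fcoeff_const coeffs fcoeff_0)
qed

section \<open>Absolutely convergent trigonometric series\<close>

lemma sums_set_integral_if_uniformly_bounded:
  fixes F :: "nat \<Rightarrow> 'a \<Rightarrow> 'b::{banach, second_countable_topology}"
  assumes A: "A \<in> sets M" "emeasure M A < \<infinity>"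
    and F: "\<And>n. set_integrable M A (F n)"
    and bounded: "\<And>n x. x \<in> A \<Longrightarrow> norm (F n x) \<le> b n" and b: "summable b"
  shows "(\<lambda>n. LINT x:A|M. F n x) sums (LINT x:A|M. (\<Sum>n. F n x))"
proof -
  define G where "G n x = indicator A x *\<^sub>R F n x" for n x
  have G: "integrable M (G n)" for n using F unfolding G_def set_integrable_def .
  have G_bounded: "norm (G n x) \<le> indicator A x * b n" for n x
    using bounded[of x n] by (simp add: G_def indicator_def)
  have "summable (\<lambda>n. norm (G n x))" for x
    by (rule summable_comparison_test[OF _ summable_mult[OF b, of "indicator A x"]]) (use G_bounded in auto)
  moreover have integral_norm_summable: "summable (\<lambda>n. LINT x|M. norm (G n x))"
  proof (rule summable_comparison_test[OF _ summable_mult2[OF b, of "measure M A"]])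
    have "(LINT x|M. norm (G n x)) \<le> (LINT x|M. indicator A x * b n)" for n
      using G G_bounded A by (intro integral_mono) (auto intro: integrable_real_indicator)
    then show "\<exists>N. \<forall>n\<ge>N. norm (LINT x|M. norm (G n x)) \<le> b n * measure M A"
      using A by (simp add: mult.commute)
  qed
  moreover have "summable (\<lambda>n. LINT x|M. G n x)"
    by (rule summable_norm_cancel, rule summable_comparison_test[OF _ integral_norm_summable])
      (simp add: integral_norm_bound)
  ultimately have "(\<lambda>n. LINT x|M. G n x) sums (LINT x|M. (\<Sum>n. G n x))"
    using G by (simp add: summable_sums integral_suminf)
  moreover have "(\<Sum>n. G n x) = indicator A x *\<^sub>R (\<Sum>n. F n x)" for x
  proof (cases "x \<in> A")
    case True
    have "summable (\<lambda>n. F n x)"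
      by (rule summable_norm_cancel, rule summable_comparison_test[OF _ b]) (use bounded True in auto)
    then show ?thesis using True by (simp add: G_def suminf_scaleR_right)
  qed (simp add: G_def)
  ultimately show ?thesis by (simp add: G_def set_lebesgue_integral_def)
qed

lemma fcoeff_suminf:
  fixes f :: "nat \<Rightarrow> real \<Rightarrow> real"
  assumes continuous: "\<And>n. continuous_on {0..2*pi} (f n)"
    and bounded: "\<And>n x. \<bar>f n x\<bar> \<le> b n" and b: "summable b"
  shows "(\<lambda>n. fcoeff (f n) k) sums fcoeff (\<lambda>x. \<Sum>n. f n x) k"
proof -
  have "(\<lambda>n. LINT x:{0..2*pi}|lebesgue. complex_of_real (f n x) * cis (- (real_of_int k * x)))
      sums (LINT x:{0..2*pi}|lebesgue. (\<Sum>n. complex_of_real (f n x) * cis (- (real_of_int k * x))))"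
    using bounded b
    by (intro sums_set_integral_if_uniformly_bounded absolutely_integrable_continuous_real continuous_intros continuous)
      (auto simp: norm_mult)
  moreover have "(\<Sum>n. complex_of_real (f n x) * cis (- (real_of_int k * x)))
      = complex_of_real (\<Sum>n. f n x) * cis (- (real_of_int k * x))" for x
  proof -
    have "summable (\<lambda>n. f n x)"
      by (rule summable_comparison_test[OF _ b]) (use bounded in auto)
    then show ?thesis by (simp add: suminf_mult2 suminf_of_real)
  qed
  ultimately have "(\<lambda>n. 2 * pi * fcoeff (f n) k) sums (2 * pi * fcoeff (\<lambda>x. \<Sum>n. f n x) k)"
    by (simp add: set_integral_fcoeff)
  from sums_mult[OF this, of "1 / (2 * pi)"] show ?thesis by simp
qed

lemma fcoeff_Re_cis:
  "fcoeff (\<lambda>x. 2 * Re (c * cis (real_of_int m * x))) k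
     = (if k = m then c else 0) + (if k = - m then cnj c else 0)"
proof -
  have integrand_eq: "complex_of_real (2 * Re (c * cis (real_of_int m * x))) * cis (- (real_of_int k * x))
     = c * cis (real_of_int (m - k) * x) + cnj c * cis (real_of_int (- m - k) * x)" for x
  proof -
    have "complex_of_real (2 * Re (c * cis (real_of_int m * x)))
        = c * cis (real_of_int m * x) + cnj (c * cis (real_of_int m * x))"
      by (simp only: complex_add_cnj)
    also have "cnj (c * cis (real_of_int m * x)) = cnj c * cis (- (real_of_int m * x))"
      by (simp only: complex_cnj_mult cis_cnj)
    finally have "complex_of_real (2 * Re (c * cis (real_of_int m * x)))
        = c * cis (real_of_int m * x) + cnj c * cis (- (real_of_int m * x))" .
    moreover have "cis (real_of_int m * x) * cis (- (real_of_int k * x)) = cis (real_of_int (m - k) * x)"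
      unfolding cis_mult by (rule arg_cong[where f = cis]) (simp add: algebra_simps)
    moreover have "cis (- (real_of_int m * x)) * cis (- (real_of_int k * x)) = cis (real_of_int (- m - k) * x)"
      unfolding cis_mult by (rule arg_cong[where f = cis]) (simp add: algebra_simps)
    ultimately show ?thesis by (simp only: distrib_right mult.assoc)
  qed
  have "set_integrable lebesgue {0..2*pi} (\<lambda>x. c * cis (real_of_int (m - k) * x))"
       "set_integrable lebesgue {0..2*pi} (\<lambda>x. cnj c * cis (real_of_int (- m - k) * x))"
    by (intro absolutely_integrable_continuous_real continuous_intros)+
  then have "2 * pi * fcoeff (\<lambda>x. 2 * Re (c * cis (real_of_int m * x))) k
      = c * (LINT x:{0..2*pi}|lebesgue. cis (real_of_int (m - k) * x))
        + cnj c * (LINT x:{0..2*pi}|lebesgue. cis (real_of_int (- m - k) * x))"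
    by (simp only: integrand_eq set_integral_add(2) set_integral_mult_right flip: set_integral_fcoeff)
  also have "\<dots> = 2 * pi * ((if k = m then c else 0) + (if k = - m then cnj c else 0))"
    by (simp only: set_integral_cis) (auto simp: algebra_simps)
  finally show ?thesis by simp
qed

definition trig_series :: "(nat \<Rightarrow> complex) \<Rightarrow> real \<Rightarrow> real" where
  "trig_series a x = (\<Sum>n. 2 * Re (a n * cis (real (Suc n) * x)))"

lemma fcoeff_trig_series:
  assumes a: "summable (\<lambda>n. cmod (a n))"
  shows "fcoeff (trig_series a) k
    = (if k > 0 then a (nat k - 1) else if k < 0 then cnj (a (nat (- k) - 1)) else 0)"
proof -
  let ?c = "\<lambda>n. (if k = int (Suc n) then a n else 0) + (if k = - int (Suc n) then cnj (a n) else 0)"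
  have "(\<lambda>n. fcoeff (\<lambda>x. 2 * Re (a n * cis (real (Suc n) * x))) k) sums fcoeff (trig_series a) k"
    unfolding trig_series_def
  proof (rule fcoeff_suminf)
    show "continuous_on {0..2*pi} (\<lambda>x. 2 * Re (a n * cis (real (Suc n) * x)))" for n
      by (intro continuous_intros)
    show "\<bar>2 * Re (a n * cis (real (Suc n) * x))\<bar> \<le> 2 * cmod (a n)" for n x
      using abs_Re_le_cmod[of "a n * cis (real (Suc n) * x)"] by (simp add: norm_mult)
    show "summable (\<lambda>n. 2 * cmod (a n))" using a by simp
  qed
  moreover have "fcoeff (\<lambda>x. 2 * Re (a n * cis (real (Suc n) * x))) k = ?c n" for n
    using fcoeff_Re_cis[of "a n" "int (Suc n)" k] by (simp only: of_int_of_nat_eq)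
  ultimately have "?c sums fcoeff (trig_series a) k" by simp
  moreover have "?c sums (if k > 0 then a (nat k - 1) else if k < 0 then cnj (a (nat (- k) - 1)) else 0)"
  proof -
    consider "k > 0" | "k < 0" | "k = 0" by linarith
    then show ?thesis
    proof cases
      case 1
      then have "?c = (\<lambda>n. if n = nat k - 1 then a n else 0)" by (auto simp: fun_eq_iff)
      then show ?thesis using 1 sums_single[of "nat k - 1" a] by simp
    next
      case 2
      then have "?c = (\<lambda>n. if n = nat (- k) - 1 then cnj (a n) else 0)" by (auto simp: fun_eq_iff)
      then show ?thesis using 2 sums_single[of "nat (- k) - 1" "\<lambda>n. cnj (a n)"] by simp
    qed simp
  qed
  ultimately show ?thesis by (rule sums_unique2)
qed

lemma fcoeff_trig_series_fcoeff:
  assumes mean_zero: "fcoeff w 0 = 0" and summable: "summable (\<lambda>n. cmod (fcoeff w (int (Suc n))))"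
  shows "fcoeff (trig_series (\<lambda>n. fcoeff w (int (Suc n)))) k = fcoeff w k"
proof -
  consider "k > 0" | "k < 0" | "k = 0" by linarith
  then show ?thesis
  proof cases
    case 1
    then show ?thesis unfolding fcoeff_trig_series[OF summable] by simp
  next
    case 2
    then have "fcoeff (trig_series (\<lambda>n. fcoeff w (int (Suc n)))) k = cnj (fcoeff w (- k))"
      unfolding fcoeff_trig_series[OF summable] by simp
    then show ?thesis by (simp flip: fcoeff_uminus)
  next
    case 3
    then show ?thesis unfolding fcoeff_trig_series[OF summable] by (simp add: mean_zero)
  qed
qed

lemma norm_cis_diff_le: "cmod (cis s - cis t) \<le> \<bar>s - t\<bar>"
proof -
  let ?u = "s - t"
  have "cis s - cis t = cis t * (cis ?u - 1)" by (simp add: algebra_simps cis_mult)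
  then have "cmod (cis s - cis t) = cmod (cis ?u - 1)" by (simp add: norm_mult)
  moreover have "(cmod (cis ?u - 1))\<^sup>2 = 4 * (sin (?u / 2))\<^sup>2"
  proof -
    have "(cmod (cis ?u - 1))\<^sup>2 = (cos ?u - 1)\<^sup>2 + (sin ?u)\<^sup>2" by (simp add: cmod_power2)
    also have "\<dots> = 2 - 2 * cos ?u" by (simp add: power2_diff sin_squared_eq algebra_simps)
    also have "cos ?u = cos (2 * (?u / 2))" by (simp only: mult_2 field_sum_of_halves)
    also have "2 - 2 * \<dots> = 4 * (sin (?u / 2))\<^sup>2" by (simp only: cos_double_sin) simp
    finally show ?thesis .
  qed
  moreover have "(sin (?u / 2))\<^sup>2 \<le> (?u / 2)\<^sup>2"
    using abs_sin_x_le_abs_x[of "?u / 2"] by (simp only: abs_le_square_iff)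
  ultimately have "(cmod (cis s - cis t))\<^sup>2 \<le> ?u\<^sup>2" by (simp add: power_divide)
  then show ?thesis by (simp only: abs_le_square_iff[symmetric] abs_norm_cancel)
qed

lemma abs_Re_cis_diff_le:
  "\<bar>2 * Re (c * cis (m * x)) - 2 * Re (c * cis (m * y))\<bar> \<le> 2 * \<bar>m\<bar> * cmod c * \<bar>x - y\<bar>"
proof -
  have "2 * Re (c * cis (m * x)) - 2 * Re (c * cis (m * y)) = 2 * Re (c * (cis (m * x) - cis (m * y)))"
    by (simp only: right_diff_distrib minus_complex.sel)
  then have "\<bar>2 * Re (c * cis (m * x)) - 2 * Re (c * cis (m * y))\<bar> \<le> 2 * (cmod c * cmod (cis (m * x) - cis (m * y)))"
    using abs_Re_le_cmod[of "c * (cis (m * x) - cis (m * y))"] by (simp add: norm_mult abs_mult)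
  also have "\<dots> \<le> 2 * (cmod c * (\<bar>m\<bar> * \<bar>x - y\<bar>))"
    using norm_cis_diff_le[of "m * x" "m * y"]
    by (intro mult_left_mono) (auto simp: abs_mult simp flip: right_diff_distrib)
  finally show ?thesis by (simp only: mult_ac)
qed

lemma lipschitz_on_trig_series:
  assumes a: "summable (\<lambda>n. real (Suc n) * cmod (a n))"
  shows "(\<Sum>n. 2 * real (Suc n) * cmod (a n))-lipschitz_on S (trig_series a)"
proof (rule lipschitz_onI)
  let ?L = "\<Sum>n. 2 * real (Suc n) * cmod (a n)"
  let ?t = "\<lambda>x n. 2 * Re (a n * cis (real (Suc n) * x))"
  have L_summable: "summable (\<lambda>n. 2 * real (Suc n) * cmod (a n))"
    using summable_mult[OF a, of 2] by (simp only: mult.assoc)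
  then show "0 \<le> ?L" by (rule suminf_nonneg) simp
  fix x y
  have a_summable: "summable (\<lambda>n. cmod (a n))"
    by (rule summable_comparison_test[OF _ a]) (auto intro!: exI[of _ 0] mult_le_cancel_right1[THEN iffD2])
  have t_summable: "summable (?t z)" for z
  proof (rule summable_comparison_test[OF _ summable_mult[OF a_summable, of 2]])
    have "\<bar>?t z n\<bar> \<le> 2 * cmod (a n)" for n
      using abs_Re_le_cmod[of "a n * cis (real (Suc n) * z)"] by (simp add: norm_mult)
    then show "\<exists>N. \<forall>n\<ge>N. norm (?t z n) \<le> 2 * cmod (a n)" by simp
  qed
  have term_bound: "\<bar>?t x n - ?t y n\<bar> \<le> 2 * real (Suc n) * cmod (a n) * \<bar>x - y\<bar>" for n
    using abs_Re_cis_diff_le[of "a n" "real (Suc n)" x y] by simp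
  have bound_summable: "summable (\<lambda>n. 2 * real (Suc n) * cmod (a n) * \<bar>x - y\<bar>)"
    by (rule summable_mult2[OF L_summable])
  have diff_summable: "summable (\<lambda>n. \<bar>?t x n - ?t y n\<bar>)"
    by (rule summable_comparison_test[OF _ bound_summable]) (use term_bound in auto)
  have "\<bar>trig_series a x - trig_series a y\<bar> = \<bar>\<Sum>n. ?t x n - ?t y n\<bar>"
    unfolding trig_series_def using suminf_diff[OF t_summable t_summable] by simp
  also have "\<dots> \<le> (\<Sum>n. \<bar>?t x n - ?t y n\<bar>)"
    by (rule summable_rabs[OF diff_summable])
  also have "\<dots> \<le> ?L * \<bar>x - y\<bar>"
    unfolding suminf_mult2[OF L_summable] by (rule suminf_le[OF term_bound diff_summable bound_summable])
  finally show "dist (trig_series a x) (trig_series a y) \<le> ?L * dist x y"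
    by (simp add: dist_real_def)
qed

lemma exists_root_if_set_integral_eq_0:
  fixes W :: "real \<Rightarrow> real"
  assumes "a < b" and W: "continuous_on {a..b} W" and integral: "(LINT x:{a..b}|lebesgue. W x) = 0"
  shows "\<exists>x0\<in>{a..b}. W x0 = 0"
proof -
  obtain x_min where x_min: "x_min \<in> {a..b}" "\<And>y. y \<in> {a..b} \<Longrightarrow> W x_min \<le> W y"
    using continuous_attains_inf[OF compact_Icc _ W] \<open>a < b\<close> by auto
  obtain x_max where x_max: "x_max \<in> {a..b}" "\<And>y. y \<in> {a..b} \<Longrightarrow> W y \<le> W x_max"
    using continuous_attains_sup[OF compact_Icc _ W] \<open>a < b\<close> by auto
  have W_integrable: "set_integrable lebesgue {a..b} W"
    using W by (rule absolutely_integrable_continuous_real)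
  have const_integrable: "set_integrable lebesgue {a..b} (\<lambda>x. c :: real)" for c
    by (rule absolutely_integrable_continuous_real) (rule continuous_on_const)
  have integral_const: "(LINT x:{a..b}|lebesgue. c) = (b - a) * c" for c
    using \<open>a < b\<close> by (simp add: set_integral_const)
  have "(b - a) * W x_min \<le> 0"
    using set_integral_mono[OF const_integrable W_integrable, of "W x_min"] x_min integral
    by (simp add: integral_const)
  moreover have "(b - a) * W x_max \<ge> 0"
    using set_integral_mono[OF W_integrable const_integrable, of "W x_max"] x_max integral
    by (simp add: integral_const)
  ultimately have "W x_min \<le> 0" "0 \<le> W x_max"
    using \<open>a < b\<close> by (simp_all add: mult_le_0_iff zero_le_mult_iff)
  moreover have "connected (W ` {a..b})" by (rule connected_continuous_image[OF W connected_Icc])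
  ultimately have "0 \<in> W ` {a..b}"
    using x_min(1) x_max(1) connected_contains_Icc by fastforce
  then show ?thesis by auto
qed

lemma exists_lipschitz_version_with_root:
  fixes w :: "real \<Rightarrow> real"
  assumes w: "set_integrable lebesgue {0..2*pi} w" and mean_zero: "fcoeff w 0 = 0"
    and summable: "summable (\<lambda>n. real (Suc n) * cmod (fcoeff w (int (Suc n))))"
  obtains W x0 L where "AE x in lebesgue. x \<in> {0..2*pi} \<longrightarrow> w x = W x"
    and "x0 \<in> {0..2*pi}" and "\<And>x. \<bar>W x\<bar> \<le> L * \<bar>x - x0\<bar>"
proof -
  define W where "W = trig_series (\<lambda>n. fcoeff w (int (Suc n)))"
  define L where "L = (\<Sum>n. 2 * real (Suc n) * cmod (fcoeff w (int (Suc n))))"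
  have lipschitz: "L-lipschitz_on UNIV W"
    unfolding W_def L_def using summable by (rule lipschitz_on_trig_series)
  then have W_continuous: "continuous_on {0..2*pi} W"
    by (rule continuous_on_subset[OF lipschitz_on_continuous_on]) simp
  have "summable (\<lambda>n. cmod (fcoeff w (int (Suc n))))"
    by (rule summable_comparison_test[OF _ summable]) (auto intro!: exI[of _ 0] mult_le_cancel_right1[THEN iffD2])
  then have W_coeffs: "fcoeff W k = fcoeff w k" for k
    unfolding W_def using mean_zero by (rule fcoeff_trig_series_fcoeff[rotated])
  have "(LINT x:{0..2*pi}|lebesgue. W x) = 0"
    using W_coeffs[of 0] mean_zero by (simp add: fcoeff_0)
  then obtain x0 where "x0 \<in> {0..2*pi}" "W x0 = 0"
    using exists_root_if_set_integral_eq_0[OF _ W_continuous] by auto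
  moreover have "\<bar>W x\<bar> \<le> L * \<bar>x - x0\<bar>" for x
    using lipschitz_onD[OF lipschitz, of x x0] \<open>W x0 = 0\<close> by (simp add: dist_real_def)
  moreover have "AE x in lebesgue. x \<in> {0..2*pi} \<longrightarrow> w x = W x"
    using W_coeffs absolutely_integrable_continuous_real[OF W_continuous]
    by (intro AE_eq_if_fcoeff_eq[OF w]) simp_all
  ultimately show ?thesis using that by blast
qed

section \<open>Square-integrable functions\<close>

lemma L2_per_const: "L2_per (\<lambda>x. c)"
  unfolding L2_per_def by (auto intro: absolutely_integrable_continuous_real)

lemma set_integrable_mult_if_L2_per:
  assumes f: "L2_per f" and g: "L2_per g"
  shows "set_integrable lebesgue {0..2*pi} (\<lambda>x. f x * g x)"
proof (rule set_integrable_bound)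
  show "set_integrable lebesgue {0..2*pi} (\<lambda>x. (f x)\<^sup>2 + (g x)\<^sup>2)"
    using assms unfolding L2_per_def by (intro set_integral_add(1)) auto
  have [measurable]: "f \<in> borel_measurable lebesgue" "g \<in> borel_measurable lebesgue"
    using assms by (auto simp: L2_per_def)
  have [measurable]: "(\<lambda>x::real. x) \<in> borel_measurable lebesgue" by (rule measurable_completion) simp
  show "set_borel_measurable lebesgue {0..2*pi} (\<lambda>x. f x * g x)"
    unfolding set_borel_measurable_def by measurable
  have "\<bar>f x * g x\<bar> \<le> (f x)\<^sup>2 + (g x)\<^sup>2" for x
  proof -
    have "2 * (\<bar>f x\<bar> * \<bar>g x\<bar>) \<le> (f x)\<^sup>2 + (g x)\<^sup>2"
      using sum_squares_bound[of "\<bar>f x\<bar>" "\<bar>g x\<bar>"] by (simp add: mult.assoc)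
    moreover have "0 \<le> \<bar>f x\<bar> * \<bar>g x\<bar>" by simp
    ultimately show ?thesis unfolding abs_mult by linarith
  qed
  then show "AE x in lebesgue. x \<in> {0..2*pi} \<longrightarrow> norm (f x * g x) \<le> norm ((f x)\<^sup>2 + (g x)\<^sup>2)"
    by simp
qed

lemma set_integrable_if_L2_per: "L2_per f \<Longrightarrow> set_integrable lebesgue {0..2*pi} f"
  using set_integrable_mult_if_L2_per[OF _ L2_per_const, of f 1] by simp

lemma square_le_mult_set_integral_square:
  fixes f :: "real \<Rightarrow> real"
  assumes "0 \<le> K" "0 < e" and e_le: "e \<le> (b - a) / 2" and x0: "x0 \<in> {a..b}"
    and f: "set_integrable lebesgue {a..b} (\<lambda>x. (f x)\<^sup>2)"
    and bound: "AE x in lebesgue. x \<in> {a..b} \<longrightarrow> \<bar>c\<bar> \<le> K * \<bar>x - x0\<bar> * \<bar>f x\<bar>"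
  shows "c\<^sup>2 \<le> K\<^sup>2 * e * (LINT x:{a..b}|lebesgue. (f x)\<^sup>2)"
proof -
  obtain l where J: "{l..l + e} \<subseteq> {a..b}" and J_near: "\<And>x. x \<in> {l..l + e} \<Longrightarrow> \<bar>x - x0\<bar> \<le> e"
  proof (cases "x0 \<le> (a + b) / 2")
    case True
    show ?thesis by (rule that[of x0]) (use True x0 e_le in auto)
  next
    case False
    show ?thesis by (rule that[of "x0 - e"]) (use False x0 e_le in auto)
  qed
  let ?J = "{l..l + e}"
  have lower: "AE x in lebesgue. x \<in> ?J \<longrightarrow> c\<^sup>2 \<le> K\<^sup>2 * e\<^sup>2 * (f x)\<^sup>2"
    using bound
  proof eventually_elim
    case (elim x)
    show ?case
    proof
      assume "x \<in> ?J"
      then have "\<bar>c\<bar> \<le> K * e * \<bar>f x\<bar>"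
        using elim J J_near[of x] \<open>0 \<le> K\<close> by (meson order_trans mult_left_mono mult_right_mono abs_ge_zero subsetD)
      then have "\<bar>c\<bar>\<^sup>2 \<le> (K * e * \<bar>f x\<bar>)\<^sup>2" by (rule power_mono) simp
      then show "c\<^sup>2 \<le> K\<^sup>2 * e\<^sup>2 * (f x)\<^sup>2" by (simp add: power_mult_distrib)
    qed
  qed
  have fJ: "set_integrable lebesgue ?J (\<lambda>x. (f x)\<^sup>2)" by (rule set_integrable_subset[OF f _ J]) simp
  have "e * c\<^sup>2 = (LINT x:?J|lebesgue. c\<^sup>2)"
    using \<open>0 < e\<close> by (simp add: set_integral_const)
  also have "\<dots> \<le> (LINT x:?J|lebesgue. K\<^sup>2 * e\<^sup>2 * (f x)\<^sup>2)"
    by (rule set_integral_mono_AE[OF absolutely_integrable_continuous_real[OF continuous_on_const]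
          set_integrable_mult_right[OF fJ] lower])
  also have "\<dots> \<le> K\<^sup>2 * e\<^sup>2 * (LINT x:{a..b}|lebesgue. (f x)\<^sup>2)"
    unfolding set_integral_mult_right set_lebesgue_integral_def
    using fJ f J unfolding set_integrable_def
    by (intro mult_left_mono integral_mono) (auto simp: indicator_def)
  finally show ?thesis
    using \<open>0 < e\<close> by (simp add: power2_eq_square mult_ac)
qed

lemma eq_0_if_abs_le_dist_mult_L2:
  fixes f :: "real \<Rightarrow> real"
  assumes "a < b" and x0: "x0 \<in> {a..b}" and f: "set_integrable lebesgue {a..b} (\<lambda>x. (f x)\<^sup>2)"
    and bound: "AE x in lebesgue. x \<in> {a..b} \<longrightarrow> \<bar>c\<bar> \<le> L * \<bar>x - x0\<bar> * \<bar>f x\<bar>"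
  shows "c = 0"
proof -
  define F where "F = (LINT x:{a..b}|lebesgue. (f x)\<^sup>2)"
  have "F \<ge> 0" unfolding F_def set_lebesgue_integral_def by (rule Bochner_Integration.integral_nonneg) simp
  have bound': "AE x in lebesgue. x \<in> {a..b} \<longrightarrow> \<bar>c\<bar> \<le> \<bar>L\<bar> * \<bar>x - x0\<bar> * \<bar>f x\<bar>"
  proof -
    have "L * \<bar>x - x0\<bar> * \<bar>f x\<bar> \<le> \<bar>L\<bar> * \<bar>x - x0\<bar> * \<bar>f x\<bar>" for x
      by (intro mult_right_mono) auto
    with bound show ?thesis by (auto elim!: eventually_mono intro: order_trans)
  qed
  have "c\<^sup>2 \<le> 0 + d" if "d > 0" for d
  proof -
    define e where "e = min ((b - a) / 2) (d / (L\<^sup>2 * F + 1))"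
    have "L\<^sup>2 * F + 1 > 0" using \<open>F \<ge> 0\<close> by (simp add: add_nonneg_pos)
    then have "0 < e" using \<open>a < b\<close> \<open>d > 0\<close> by (simp add: e_def)
    have "e \<le> (b - a) / 2" unfolding e_def by (rule min.cobounded1)
    have "e \<le> d / (L\<^sup>2 * F + 1)" unfolding e_def by (rule min.cobounded2)
    then have "(L\<^sup>2 * F + 1) * e \<le> d"
      using \<open>L\<^sup>2 * F + 1 > 0\<close> by (simp add: le_divide_eq mult.commute)
    moreover have "c\<^sup>2 \<le> L\<^sup>2 * e * F"
      using square_le_mult_set_integral_square[OF _ \<open>0 < e\<close> \<open>e \<le> (b - a) / 2\<close> x0 f bound'] by (simp add: F_def)
    ultimately show ?thesis using \<open>0 < e\<close> by (simp add: algebra_simps)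
  qed
  then have "c\<^sup>2 \<le> 0" by (rule field_le_epsilon)
  then show ?thesis by simp
qed

section \<open>Regularity of the multiplier image of \<open>q\<^sub>x\<close>\<close>

lemma summable_Suc_mult_abs_if_summable_Suc_power4:
  fixes b :: "nat \<Rightarrow> real"
  assumes "summable (\<lambda>n. real (Suc n) ^ 4 * (b n)\<^sup>2)"
  shows "summable (\<lambda>n. real (Suc n) * \<bar>b n\<bar>)"
proof -
  have "summable (\<lambda>n. inverse (real (Suc n) ^ 2))"
    using inverse_power_summable[of 2, where 'a = real] by (subst summable_Suc_iff) simp
  then have dominant_summable: "summable (\<lambda>n. (real (Suc n) ^ 4 * (b n)\<^sup>2 + inverse (real (Suc n) ^ 2)) / 2)"
    using assms by (intro summable_divide summable_add)
  have dominated: "real (Suc n) * \<bar>b n\<bar> \<le> (real (Suc n) ^ 4 * (b n)\<^sup>2 + inverse (real (Suc n) ^ 2)) / 2" for n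
  proof -
    let ?m = "real (Suc n)"
    \<comment> \<open>AM-GM for \<open>m\<^sup>2 \<bar>b\<bar>\<close> and \<open>1 / m\<close>.\<close>
    have "2 * (?m\<^sup>2 * \<bar>b n\<bar>) * inverse ?m \<le> (?m\<^sup>2 * \<bar>b n\<bar>)\<^sup>2 + (inverse ?m)\<^sup>2"
      by (rule sum_squares_bound)
    moreover have "?m\<^sup>2 * \<bar>b n\<bar> * inverse ?m = ?m * \<bar>b n\<bar>"
      by (simp add: power2_eq_square)
    moreover have "(?m\<^sup>2 * \<bar>b n\<bar>)\<^sup>2 = ?m ^ 4 * (b n)\<^sup>2"
      by (simp add: power_mult_distrib flip: power_mult)
    moreover have "(inverse ?m)\<^sup>2 = inverse (?m ^ 2)"
      by (simp add: power_inverse)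
    ultimately have "2 * (?m * \<bar>b n\<bar>) \<le> ?m ^ 4 * (b n)\<^sup>2 + inverse (?m ^ 2)"
      by (metis mult.assoc)
    then show ?thesis by simp
  qed
  show ?thesis
    by (rule summable_comparison_test[OF _ dominant_summable]) (use dominated in \<open>auto intro!: exI[of _ 0]\<close>)
qed

lemma summable_fcoeff_if_H2_per:
  assumes "H2_per q"
  shows "summable (\<lambda>n. real (Suc n) * cmod (fcoeff q (int (Suc n))))"
proof -
  have "(\<lambda>k::int. (real_of_int k)^4 * (cmod (fcoeff q k))\<^sup>2) summable_on range (\<lambda>n. int (Suc n))"
    using assms unfolding H2_per_def by (auto intro: summable_on_subset_banach)
  then have "(\<lambda>n. real (Suc n) ^ 4 * (cmod (fcoeff q (int (Suc n))))\<^sup>2) summable_on UNIV"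
    by (subst (asm) summable_on_reindex) (auto simp: inj_on_def o_def)
  then have "summable (\<lambda>n. real (Suc n) ^ 4 * (cmod (fcoeff q (int (Suc n))))\<^sup>2)"
    by (rule summable_on_imp_summable)
  from summable_Suc_mult_abs_if_summable_Suc_power4[OF this] show ?thesis by simp
qed

lemma summable_fcoeff_multiplier_image_of_derivative:
  assumes P_decay: "\<And>k. \<bar>P k\<bar> * \<bar>real_of_int k\<bar> \<le> C" and q_H2: "H2_per q"
    and w_is_Pqx: "is_multiplier_image (\<lambda>k. complex_of_real (P k) * (\<i> * of_int k)) q w"
  shows "summable (\<lambda>n. real (Suc n) * cmod (fcoeff w (int (Suc n))))"
proof (rule summable_comparison_test[OF _ summable_mult[OF summable_fcoeff_if_H2_per[OF q_H2], of C]])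
  have "real (Suc n) * cmod (fcoeff w (int (Suc n)))
      = (\<bar>P (int (Suc n))\<bar> * real (Suc n)) * (real (Suc n) * cmod (fcoeff q (int (Suc n))))" for n
    using w_is_Pqx norm_of_nat[of "Suc n", where 'a = complex]
    by (simp add: is_multiplier_image_def norm_mult)
  also have "\<dots> n \<le> C * (real (Suc n) * cmod (fcoeff q (int (Suc n))))" for n
    using P_decay[of "int (Suc n)"] by (intro mult_right_mono) simp_all
  finally show "\<exists>N. \<forall>n\<ge>N. norm (real (Suc n) * cmod (fcoeff w (int (Suc n))))
      \<le> C * (real (Suc n) * cmod (fcoeff q (int (Suc n))))"
    by auto
qed

lemma P_rB_pos: "P_rB \<mu> k > 0"
  by (simp add: P_rB_def add_pos_nonneg)

lemma P_rBW_pos: "\<mu> > 0 \<Longrightarrow> P_rBW \<mu> k > 0"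
  by (auto simp: P_rBW_def zero_less_divide_iff zero_less_mult_iff mult_less_0_iff)

lemma P_rB_mult_abs_le:
  assumes "\<mu> > 0"
  shows "P_rB \<mu> k * \<bar>real_of_int k\<bar> \<le> 1 / \<mu>"
proof -
  let ?t = "\<mu> * \<bar>real_of_int k\<bar>"
  have "2 * ?t * 1 \<le> ?t\<^sup>2 + 1\<^sup>2" by (rule sum_squares_bound)
  then have "\<mu> * \<bar>real_of_int k\<bar> \<le> 1 + \<mu>\<^sup>2 * (real_of_int k)\<^sup>2 / 2"
    by (simp add: power_mult_distrib)
  then show ?thesis
    using assms by (simp add: P_rB_def field_simps add_pos_nonneg)
qed

lemma P_rBW_mult_abs_le:
  assumes "\<mu> > 0"
  shows "P_rBW \<mu> k * \<bar>real_of_int k\<bar> \<le> 1 / \<mu>"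
proof (cases "k = 0")
  case False
  have "P_rBW \<mu> k * \<bar>real_of_int k\<bar> = \<bar>P_rBW \<mu> k * real_of_int k\<bar>"
    using P_rBW_pos[OF assms] by (simp add: abs_mult abs_of_pos)
  also have "\<dots> = \<bar>tanh (\<mu> * real_of_int k)\<bar> / \<mu>"
    using False assms by (simp add: P_rBW_def abs_divide)
  also have "\<dots> \<le> 1 / \<mu>"
    using tanh_real_bounds[of "\<mu> * real_of_int k"] assms by (intro divide_right_mono) auto
  finally show ?thesis .
qed (use assms in simp)

lemma no_zero_eigenvalue:
  fixes P :: "int \<Rightarrow> real" and q w f u :: "real \<Rightarrow> real"
  assumes P_nonzero: "\<And>k. k \<noteq> 0 \<Longrightarrow> P k \<noteq> 0"
    and P_decay: "\<And>k. \<bar>P k\<bar> * \<bar>real_of_int k\<bar> \<le> C"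
    and q_H2: "H2_per q"
    and w_is_Pqx: "is_multiplier_image (\<lambda>k. complex_of_real (P k) * (\<i> * of_int k)) q w"
    and w_nonvanishing: "{x \<in> {0..2*pi}. w x = 0} \<in> null_sets lebesgue"
    and f_L2: "L2_per f"
    and u_def: "is_multiplier_image (\<lambda>k. complex_of_real (- ((real_of_int k)^2 * (P k)^2)))
                  (\<lambda>x. w x * f x) u"
    and eigen: "AE x in lebesgue. x \<in> {0..2*pi} \<longrightarrow> w x * u x = 0"
  shows "AE x in lebesgue. x \<in> {0..2*pi} \<longrightarrow> f x = 0"
proof -
  have w_L2: "L2_per w" and "fcoeff w 0 = 0"
    using w_is_Pqx unfolding is_multiplier_image_def by auto
  then obtain W x0 L where w_eq_W: "AE x in lebesgue. x \<in> {0..2*pi} \<longrightarrow> w x = W x"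
    and "x0 \<in> {0..2*pi}" and W_bound: "\<And>x. \<bar>W x\<bar> \<le> L * \<bar>x - x0\<bar>"
    using summable_fcoeff_multiplier_image_of_derivative[OF P_decay q_H2 w_is_Pqx]
    by (rule exists_lipschitz_version_with_root[OF set_integrable_if_L2_per]) blast
  have w_nonzero: "AE x in lebesgue. x \<in> {0..2*pi} \<longrightarrow> w x \<noteq> 0"
    using AE_not_in[OF w_nonvanishing] by eventually_elim auto
  have "AE x in lebesgue. x \<in> {0..2*pi} \<longrightarrow> u x = 0"
    using w_nonzero eigen by eventually_elim auto
  then have "fcoeff u k = 0" for k by (rule fcoeff_eq_0_if_AE_eq_0)
  then have "fcoeff (\<lambda>x. w x * f x) k = 0" if "k \<noteq> 0" for k
    using u_def P_nonzero[OF that] that by (auto simp: is_multiplier_image_def)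
  then have wf_const: "AE x in lebesgue. x \<in> {0..2*pi} \<longrightarrow> w x * f x = Re (fcoeff (\<lambda>x. w x * f x) 0)"
    by (intro AE_eq_const_if_fcoeff_eq_0 set_integrable_mult_if_L2_per w_L2 f_L2)
  define c where "c = Re (fcoeff (\<lambda>x. w x * f x) 0)"
  have "c = 0"
  proof (rule eq_0_if_abs_le_dist_mult_L2[OF _ \<open>x0 \<in> {0..2*pi}\<close>])
    show "set_integrable lebesgue {0..2*pi} (\<lambda>x. (f x)\<^sup>2)" using f_L2 by (simp add: L2_per_def)
    show "AE x in lebesgue. x \<in> {0..2*pi} \<longrightarrow> \<bar>c\<bar> \<le> L * \<bar>x - x0\<bar> * \<bar>f x\<bar>"
      using wf_const w_eq_W
    proof eventually_elim
      case (elim x)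
      show ?case
      proof
        assume "x \<in> {0..2*pi}"
        then have "\<bar>c\<bar> = \<bar>W x\<bar> * \<bar>f x\<bar>" using elim by (simp add: c_def flip: abs_mult)
        also have "\<dots> \<le> L * \<bar>x - x0\<bar> * \<bar>f x\<bar>" by (intro mult_right_mono W_bound) simp
        finally show "\<bar>c\<bar> \<le> L * \<bar>x - x0\<bar> * \<bar>f x\<bar>" .
      qed
    qed
  qed simp
  from wf_const w_nonzero show ?thesis
    by eventually_elim (use \<open>c = 0\<close> in \<open>auto simp: c_def\<close>)
qed

theorem theorem2:
  fixes \<mu> :: real and P :: "int \<Rightarrow> real" and q w f u :: "real \<Rightarrow> real"
  assumes mu_pos: "\<mu> > 0"
    and P_choice: "P = P_rB \<mu> \<or> P = P_rBW \<mu>"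
    and q_periodic: "\<forall>x. q (x + 2*pi) = q x"
    and q_H2: "H2_per q"
    and w_is_Pqx: "is_multiplier_image (\<lambda>k. complex_of_real (P k) * (\<i> * of_int k)) q w"
    and w_nonvanishing: "{x \<in> {0..2*pi}. w x = 0} \<in> null_sets lebesgue"
    and f_L2: "L2_per f"
    and u_def: "is_multiplier_image (\<lambda>k. complex_of_real (- ((real_of_int k)^2 * (P k)^2)))
                  (\<lambda>x. w x * f x) u"
    and eigen: "AE x in lebesgue. x \<in> {0..2*pi} \<longrightarrow> w x * u x = 0"
  shows "AE x in lebesgue. x \<in> {0..2*pi} \<longrightarrow> f x = 0"
proof (rule no_zero_eigenvalue[OF _ _ q_H2 w_is_Pqx w_nonvanishing f_L2 u_def eigen])
  from P_choice have "P k > 0" and "P k * \<bar>real_of_int k\<bar> \<le> 1 / \<mu>" for k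
    using P_rB_pos P_rBW_pos[OF mu_pos] P_rB_mult_abs_le[OF mu_pos] P_rBW_mult_abs_le[OF mu_pos] by blast+
  then show "P k \<noteq> 0" and "\<bar>P k\<bar> * \<bar>real_of_int k\<bar> \<le> 1 / \<mu>" for k
    by (simp_all add: less_imp_neq[symmetric] abs_of_pos)
qed

end
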